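(* Let $C$ be a set of pairwise disjoint lines on ${\rm F}_5$ and put $C^i=C\cap\mathcal{L}^i$ for $i=0,1,2$, with $\#C^0\ge4$. Let $\{s,r\}=\{1,2\}$ and suppose $C^s=\{L^s_{a_0,b_0},\dots,L^s_{a_4,b_4}\}$ with $\#C^s=5$ and $\#C^r=4$. Then $\#\{a_0,\dots,a_4\}\ge3$.
   Context: ${\rm F}_5\subset\mathbb{P}^3(\mathbb{C})$ is the surface $x^5-y^5-z^5+w^5=0$. Let $\eta$ be a primitive 5th root of unity and $v=-1$. For $k,i\in\{0,\dots,4\}$ define $L^0_{k,i}:\{y=\eta^i x,\ w=\eta^k z\}$, $L^1_{k,i}:\{x=\eta^{k+i}z,\ y=\eta^i w\}$, $L^2_{k,i}:\{x=v\eta^i w,\ y=v\eta^{k+i}z\}$, and $\mathcal{L}^s=\{L^s_{k,i}\}_{k,i}$; these 75 lines are all the lines on ${\rm F}_5$. *)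

theory Defs
  imports Complex_Main
begin

text \<open>Points of P^3(C) are represented by their affine cones in C^4: a projective line
is the 2-dimensional linear subspace of C^4 cut out by two linear equations.
Two projective lines are disjoint iff their cones meet only in the origin.\<close>

type_synonym pt = "complex \<times> complex \<times> complex \<times> complex"

definition fermat5 :: "pt set" where
  "fermat5 = {(x,y,z,w). x^5 - y^5 - z^5 + w^5 = 0}"

definition v :: complex where "v = -1"

definition L0 :: "complex \<Rightarrow> nat \<Rightarrow> nat \<Rightarrow> pt set" where
  "L0 \<eta> k i = {(x,y,z,w). y = \<eta>^i * x \<and> w = \<eta>^k * z}"

definition L1 :: "complex \<Rightarrow> nat \<Rightarrow> nat \<Rightarrow> pt set" where
  "L1 \<eta> k i = {(x,y,z,w). x = \<eta>^(k+i) * z \<and> y = \<eta>^i * w}"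

definition L2 :: "complex \<Rightarrow> nat \<Rightarrow> nat \<Rightarrow> pt set" where
  "L2 \<eta> k i = {(x,y,z,w). x = v * \<eta>^i * w \<and> y = v * \<eta>^(k+i) * z}"

definition Lfam :: "nat \<Rightarrow> complex \<Rightarrow> nat \<Rightarrow> nat \<Rightarrow> pt set" where
  "Lfam s \<eta> k i = (if s = 0 then L0 \<eta> k i else if s = 1 then L1 \<eta> k i else L2 \<eta> k i)"

definition Lcal :: "nat \<Rightarrow> complex \<Rightarrow> pt set set" where
  "Lcal s \<eta> = {Lfam s \<eta> k i | k i. k < 5 \<and> i < 5}"

definition pairwise_disjoint_lines :: "pt set set \<Rightarrow> bool" where
  "pairwise_disjoint_lines C \<longleftrightarrow> (\<forall>L\<in>C. \<forall>M\<in>C. L \<noteq> M \<longrightarrow> L \<inter> M = {(0,0,0,0)})"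

end

theory Submission
  imports Defs "HOL-Number_Theory.Cong" "HOL-Computational_Algebra.Primes"
begin

(* Two lines L^s_{a,b}, L^s_{a',b'} of the same family s = 1, 2 meet as soon as b = b' or
   a + b = a' + b' (mod 5). Hence for the five disjoint lines of C^s both j |-> b_j and
   j |-> a_j + b_j are bijections onto Z/5; comparing their sums gives 5 | sum_j a_j. If a takes
   only two values c and d, this reads 5 | N (c - d) with N = #{j. a_j = c}, so a is constant,
   say a_0. Then C^s is the whole row L^s_{a_0,0}, ..., L^s_{a_0,4}; but L^s_{a_0,beta} meets
   L^r_{k,i} as soon as a_0 + 2 beta = k + 2 i (mod 5), so C^r would be empty. *)

lemma power_mod_exponent:
  fixes x :: "'a::monoid_mult"
  assumes "x ^ n = 1"
  shows "x ^ (m mod n) = x ^ m"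
proof -
  have "x ^ m = x ^ (m mod n) * (x ^ n) ^ (m div n)"
    by (metis mod_div_mult_eq power_add power_mult mult.commute)
  then show ?thesis using assms by simp
qed

lemma power_eq_if_mod_eq:
  fixes x :: "'a::monoid_mult"
  assumes "x ^ n = 1" "k mod n = m mod n"
  shows "x ^ k = x ^ m"
  by (metis assms power_mod_exponent)

lemma inj_on_mod_image_eq:
  assumes "inj_on (\<lambda>j. f j mod n) {..<n}"
  shows "(\<lambda>j. f j mod n) ` {..<n} = {..<(n::nat)}"
proof (rule card_subset_eq)
  show "(\<lambda>j. f j mod n) ` {..<n} \<subseteq> {..<n}" by auto
qed (simp_all add: card_image[OF assms])

lemma inj_on_mod_sum_eq:
  assumes "inj_on (\<lambda>j. f j mod n) {..<n}"
  shows "(\<Sum>j<n. f j mod n) = (\<Sum>i<(n::nat). i)"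
  using sum.reindex[OF assms, of id] inj_on_mod_image_eq[OF assms] by simp

lemma dvd_sum_if_inj_mod:
  fixes a b :: "nat \<Rightarrow> nat"
  assumes "inj_on (\<lambda>j. b j mod n) {..<n}" "inj_on (\<lambda>j. (a j + b j) mod n) {..<n}"
  shows "n dvd (\<Sum>j<n. a j)"
proof -
  have "(\<Sum>j<n. (a j + b j) mod n) mod n = (\<Sum>j<n. b j mod n) mod n"
    using inj_on_mod_sum_eq[OF assms(1)] inj_on_mod_sum_eq[OF assms(2)] by simp
  then have "[(\<Sum>j<n. a j) + (\<Sum>j<n. b j) = (\<Sum>j<n. b j)] (mod n)"
    by (simp add: mod_sum_eq sum.distrib cong_def)
  then show ?thesis by (simp add: cong_add_rcancel_0_nat cong_0_iff)
qed

lemma prime_dvd_sum_two_valued_imp_const: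
  fixes a :: "nat \<Rightarrow> nat"
  assumes p: "prime p" and dvd: "p dvd (\<Sum>j<p. a j)" and lt: "\<forall>j<p. a j < p"
    and card: "card (a ` {..<p}) \<le> 2"
  shows "\<forall>j<p. a j = a 0"
proof (rule ccontr)
  assume "\<not> ?thesis"
  then obtain j0 where j0: "j0 < p" "a j0 \<noteq> a 0" by auto
  define c d where "c = a 0" and "d = a j0"
  have "card {c, d} = 2" using j0 by (simp add: c_def d_def)
  moreover have "{c, d} \<subseteq> a ` {..<p}" using j0 by (auto simp: c_def d_def)
  ultimately have img: "a ` {..<p} = {c, d}" using card card_seteq by (metis finite_imageI finite_lessThan)
  define A where "A = {j \<in> {..<p}. a j = c}"
  have "(\<Sum>j<p. int (a j) - int d) = (\<Sum>j<p. if a j = c then int c - int d else 0)"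
    using img by (intro sum.cong) auto
  also have "\<dots> = int (card A) * (int c - int d)" by (simp add: A_def sum.inter_filter[symmetric])
  finally have "int (\<Sum>j<p. a j) - int p * int d = int (card A) * (int c - int d)"
    by (simp add: sum_subtractf)
  then have "int p dvd int (card A) * (int c - int d)" using dvd
    by (metis dvd_diff dvd_triv_left int_dvd_int_iff)
  then have "int p dvd int (card A) \<or> int p dvd int c - int d"
    using p by (simp add: prime_dvd_mult_iff prime_nat_int_transfer)
  moreover have "0 < card A" "card A < p"
  proof -
    have "0 \<in> A" "j0 \<notin> A" "A \<subseteq> {..<p}" using j0 prime_gt_0_nat[OF p] by (auto simp: A_def c_def d_def)
    then have "A \<subset> {..<p}" using j0 by auto
    then show "0 < card A" "card A < p"
      using \<open>0 \<in> A\<close> finite_subset[of A "{..<p}"] psubset_card_mono[of "{..<p}" A] by auto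
  qed
  moreover have "c < p" "d < p" "c \<noteq> d" using lt j0 prime_gt_0_nat[OF p] by (auto simp: c_def d_def)
  moreover have "\<not> int p dvd int c - int d"
    using dvd_imp_le_int[of "int c - int d" "int p"] \<open>c < p\<close> \<open>d < p\<close> \<open>c \<noteq> d\<close> by auto
  ultimately show False by (auto dest: zdvd_imp_le)
qed

definition lines_meet :: "pt set \<Rightarrow> pt set \<Rightarrow> bool" where
  "lines_meet L M \<longleftrightarrow> (\<exists>p\<in>L \<inter> M. p \<noteq> (0,0,0,0))"

lemma lines_meet_sym: "lines_meet L M \<longleftrightarrow> lines_meet M L"
  unfolding lines_meet_def by blast

lemma pairwise_disjoint_linesD:
  assumes "pairwise_disjoint_lines C" "L \<in> C" "M \<in> C" "lines_meet L M"
  shows "L = M"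
  using assms unfolding pairwise_disjoint_lines_def lines_meet_def by blast

lemma L1_meet_L1:
  assumes "\<eta> ^ b = \<eta> ^ b' \<or> \<eta> ^ (a + b) = \<eta> ^ (a' + b')"
  shows "lines_meet (L1 \<eta> a b) (L1 \<eta> a' b')"
  using assms
proof
  assume "\<eta> ^ b = \<eta> ^ b'"
  then show ?thesis
    unfolding lines_meet_def L1_def by (intro bexI[of _ "(0, \<eta> ^ b, 0, 1)"]) auto
next
  assume "\<eta> ^ (a + b) = \<eta> ^ (a' + b')"
  then show ?thesis
    unfolding lines_meet_def L1_def by (intro bexI[of _ "(\<eta> ^ (a + b), 0, 1, 0)"]) auto
qed

lemma L2_meet_L2:
  assumes "\<eta> ^ b = \<eta> ^ b' \<or> \<eta> ^ (a + b) = \<eta> ^ (a' + b')"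
  shows "lines_meet (L2 \<eta> a b) (L2 \<eta> a' b')"
  using assms
proof
  assume "\<eta> ^ b = \<eta> ^ b'"
  then show ?thesis
    unfolding lines_meet_def L2_def by (intro bexI[of _ "(v * \<eta> ^ b, 0, 0, 1)"]) auto
next
  assume "\<eta> ^ (a + b) = \<eta> ^ (a' + b')"
  then show ?thesis
    unfolding lines_meet_def L2_def by (intro bexI[of _ "(0, v * \<eta> ^ (a + b), 1, 0)"]) auto
qed

lemma L1_meet_L2:
  assumes "\<eta> \<noteq> 0" "\<eta> ^ (k + 2 * i) = \<eta> ^ (k' + 2 * i')"
  shows "lines_meet (L1 \<eta> k i) (L2 \<eta> k' i')"
proof -
  let ?p = "(\<eta> ^ (k + i + i'), v * \<eta> ^ (k + 2 * i), \<eta> ^ i', v * \<eta> ^ (k + i))"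
  have "\<eta> ^ (k + i + i') = \<eta> ^ (k + i) * \<eta> ^ i'" "\<eta> ^ (k + 2 * i) = \<eta> ^ i * \<eta> ^ (k + i)"
    "\<eta> ^ (k' + 2 * i') = \<eta> ^ (k' + i') * \<eta> ^ i'"
    by (simp_all add: power_add power_mult power2_eq_square mult_ac)
  moreover have "v * v = 1" by (simp add: v_def)
  ultimately have "?p \<in> L1 \<eta> k i" "?p \<in> L2 \<eta> k' i'"
    using assms(2) by (simp_all add: L1_def L2_def algebra_simps)
  moreover have "?p \<noteq> (0,0,0,0)" using assms(1) by simp
  ultimately show ?thesis unfolding lines_meet_def by blast
qed

lemma L1_neq_L2:
  assumes "\<eta> \<noteq> 0"
  shows "L1 \<eta> k i \<noteq> L2 \<eta> k' i'"
proof -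
  have "(0, \<eta> ^ i, 0, 1) \<in> L1 \<eta> k i" by (simp add: L1_def)
  moreover have "(0, \<eta> ^ i, 0, 1) \<notin> L2 \<eta> k' i'" using assms by (simp add: L2_def v_def)
  ultimately show ?thesis by blast
qed

lemma Lfam_meet_same:
  assumes "s \<in> {1, 2}" "\<eta> ^ b = \<eta> ^ b' \<or> \<eta> ^ (a + b) = \<eta> ^ (a' + b')"
  shows "lines_meet (Lfam s \<eta> a b) (Lfam s \<eta> a' b')"
  using assms L1_meet_L1 L2_meet_L2 by (auto simp: Lfam_def)

lemma Lfam_meet_cross:
  assumes "{s, r} = {1, 2::nat}" "\<eta> \<noteq> 0" "\<eta> ^ (k + 2 * i) = \<eta> ^ (k' + 2 * i')"
  shows "lines_meet (Lfam s \<eta> k i) (Lfam r \<eta> k' i')"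
  using assms L1_meet_L2[OF assms(2,3)] L1_meet_L2[OF assms(2) assms(3)[symmetric]]
  by (auto simp: doubleton_eq_iff Lfam_def lines_meet_sym)

lemma Lcal_cross_disjoint:
  assumes "{s, r} = {1, 2::nat}" "\<eta> \<noteq> 0"
  shows "Lcal s \<eta> \<inter> Lcal r \<eta> = {}"
  using assms L1_neq_L2[OF assms(2)] by (auto simp: doubleton_eq_iff Lcal_def Lfam_def)

lemma Lfam_row_meets_cross:
  assumes "\<eta> ^ 5 = 1" "{s, r} = {1, 2::nat}"
  shows "\<exists>\<beta><5. lines_meet (Lfam s \<eta> c \<beta>) (Lfam r \<eta> k i)"
proof (intro exI conjI)
  let ?\<beta> = "(3 * (k + 2 * i) + 2 * c) mod 5"
  show "?\<beta> < 5" by simp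
  have "(c + 2 * ?\<beta>) mod 5 = (c + 2 * (3 * (k + 2 * i) + 2 * c)) mod 5"
    by (metis mod_add_right_eq mod_mult_right_eq)
  also have "c + 2 * (3 * (k + 2 * i) + 2 * c) = (k + 2 * i) + (c + k + 2 * i) * 5" by simp
  finally have "(c + 2 * ?\<beta>) mod 5 = (k + 2 * i) mod 5" by (simp only: mod_mult_self1)
  then have "\<eta> ^ (c + 2 * ?\<beta>) = \<eta> ^ (k + 2 * i)" by (rule power_eq_if_mod_eq[OF assms(1)])
  moreover have "\<eta> \<noteq> 0" using assms(1) by auto
  ultimately show "lines_meet (Lfam s \<eta> c ?\<beta>) (Lfam r \<eta> k i)"
    by (intro Lfam_meet_cross[OF assms(2)])
qed

lemma pairwise_disjoint_Lfam_inj_mod: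
  assumes "\<eta> ^ 5 = 1" "s \<in> {1, 2}" "pairwise_disjoint_lines C"
    and "(\<lambda>j. Lfam s \<eta> (a j) (b j)) ` J \<subseteq> C" "inj_on (\<lambda>j. Lfam s \<eta> (a j) (b j)) J"
  shows "inj_on (\<lambda>j. b j mod 5) J" "inj_on (\<lambda>j. (a j + b j) mod 5) J"
proof -
  have "j = j'"
    if "j \<in> J" "j' \<in> J" "b j mod 5 = b j' mod 5 \<or> (a j + b j) mod 5 = (a j' + b j') mod 5" for j j'
  proof -
    have "lines_meet (Lfam s \<eta> (a j) (b j)) (Lfam s \<eta> (a j') (b j'))"
      using that(3) power_eq_if_mod_eq[OF assms(1)] by (intro Lfam_meet_same[OF assms(2)]) blast
    then have "Lfam s \<eta> (a j) (b j) = Lfam s \<eta> (a j') (b j')"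
      using pairwise_disjoint_linesD[OF assms(3)] assms(4) that(1,2) by blast
    then show "j = j'" using inj_onD[OF assms(5)] that(1,2) by blast
  qed
  then show "inj_on (\<lambda>j. b j mod 5) J" "inj_on (\<lambda>j. (a j + b j) mod 5) J"
    by (auto intro: inj_onI)
qed

theorem lemma3p5:
  fixes \<eta> :: complex and C :: "pt set set" and s r :: nat and a b :: "nat \<Rightarrow> nat"
  assumes eta: "\<eta>^5 = 1" "\<eta> \<noteq> 1"
    and lines: "C \<subseteq> Lcal 0 \<eta> \<union> Lcal 1 \<eta> \<union> Lcal 2 \<eta>"
    and disj: "pairwise_disjoint_lines C"
    and C0: "card (C \<inter> Lcal 0 \<eta>) \<ge> 4"
    and sr: "{s, r} = {1, 2::nat}"
    and ab: "\<forall>j<5. a j < 5 \<and> b j < 5"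
    and Cs: "C \<inter> Lcal s \<eta> = {Lfam s \<eta> (a j) (b j) | j. j < 5}"
    and Cs5: "card (C \<inter> Lcal s \<eta>) = 5"
    and Cr4: "card (C \<inter> Lcal r \<eta>) = 4"
  shows "card (a ` {0..<5}) \<ge> 3"
proof (rule ccontr)
  assume "\<not> card (a ` {0..<5}) \<ge> 3"
  then have card_a: "card (a ` {..<5}) \<le> 2" by (simp add: atLeast0LessThan)
  have \<eta>0: "\<eta> \<noteq> 0" and s12: "s \<in> {1, 2}" using eta(1) sr by auto
  define f where "f j = Lfam s \<eta> (a j) (b j)" for j
  have Cs': "C \<inter> Lcal s \<eta> = f ` {..<5}" unfolding Cs f_def by auto
  have inj_f: "inj_on f {..<5}" using Cs5 unfolding Cs' by (simp add: inj_on_iff_eq_card)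
  have inj: "inj_on (\<lambda>j. b j mod 5) {..<5}" "inj_on (\<lambda>j. (a j + b j) mod 5) {..<5}"
    using pairwise_disjoint_Lfam_inj_mod[OF eta(1) s12 disj, of a b "{..<5}"] Cs' inj_f
    unfolding f_def by auto
  have a_lt: "\<forall>j<5. a j < 5" using ab by blast
  have a_const: "\<forall>j<5. a j = a 0"
    by (rule prime_dvd_sum_two_valued_imp_const[OF _ dvd_sum_if_inj_mod[OF inj] a_lt card_a]) simp
  obtain M where M: "M \<in> C \<inter> Lcal r \<eta>" using Cr4 by (metis card.empty ex_in_conv zero_neq_numeral)
  then obtain k' i' where M_eq: "M = Lfam r \<eta> k' i'" by (auto simp: Lcal_def)
  obtain \<beta> where \<beta>: "\<beta> < 5" "lines_meet (Lfam s \<eta> (a 0) \<beta>) M"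
    unfolding M_eq using Lfam_row_meets_cross[OF eta(1) sr] by blast
  have "\<beta> \<in> (\<lambda>j. b j mod 5) ` {..<5}" using inj_on_mod_image_eq[OF inj(1)] \<beta>(1) by simp
  then obtain j where j: "j < 5" "b j mod 5 = \<beta>" by blast
  have "a j = a 0" using a_const j(1) by blast
  moreover have "b j = \<beta>" using ab j by simp
  ultimately have "lines_meet (f j) M" using \<beta>(2) by (simp add: f_def)
  then have "f j = M" using pairwise_disjoint_linesD[OF disj] M Cs' j(1) by blast
  then show False using Lcal_cross_disjoint[OF sr \<eta>0] M Cs' j(1) by blast
qed

end
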